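(* For all program states $(s,h)$ and all $f\in\mathbb{T}$, $$\mathsf{ert}[\![\langle e\rangle:=e']\!](f)(s,h)=\begin{cases} f(s,h[s(e)\mapsto s(e')]) & \text{if } s(e)\in\mathrm{dom}(h),\\ \infty & \text{if } s(e)\notin\mathrm{dom}(h),\end{cases}$$ where $\mathsf{ert}[\![\langle e\rangle:=e']\!](f)=[e\mapsto-]\oplus([e\mapsto e']\mathbin{-\!\!\ominus} f)$.
   Context: Fix a finite set $\mathrm{Vars}$ of variables. A stack is $s\colon\mathrm{Vars}\to\mathbb{N}$; a heap is a partial map $h$ from a finite set $\mathrm{dom}(h)\subseteq\mathbb{N}_{>0}$ to $\mathbb{N}$; $h_1\perp h_2$ means disjoint domains, and then $h_1\star h_2$ is their union; $h[\ell\mapsto v]$ (for $\ell\in\mathrm{dom}(h)$) is the heap updated at $\ell$. $\mathsf{States}$ is the set of pairs $(s,h)$; $s(e)$ is the value of a heap-independent arithmetic expression $e$. $\mathbb{T}$ is the set of functions $\mathsf{States}\to[0,\infty]$. Truncated subtraction: $a\dot- b=\max(a-b,0)$, $\infty\dot- b=\infty$ for finite $b$, $a\dot-\infty=0$. $(f\oplus g)(s,h)=\min\{f(s,h_1)+g(s,h_2)\mid h=h_1\star h_2\}$; $(f\mathbin{-\!\!\ominus} g)(s,h)=\sup\{g(s,h\star h')\dot- f(s,h')\mid h'\perp h\}$. $[e\mapsto e'](s,h)=0$ if $\mathrm{dom}(h)=\{s(e)\}$ and $h(s(e))=s(e')$, else $\infty$; $[e\mapsto-](s,h)=0$ if $\mathrm{dom}(h)=\{s(e)\}$,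 else $\infty$. *)

theory Defs
  imports "HOL-Analysis.Analysis" "HOL-Library.Extended_Nonnegative_Real"
begin

type_synonym 'v stack = "'v \<Rightarrow> nat"
type_synonym heap = "nat \<rightharpoonup> nat"
type_synonym 'v state = "'v stack \<times> heap"
type_synonym 'v expr = "'v stack \<Rightarrow> nat"
type_synonym 'v expect = "'v state \<Rightarrow> ennreal"

definition is_heap :: "heap \<Rightarrow> bool" where
  "is_heap h \<longleftrightarrow> finite (dom h) \<and> 0 \<notin> dom h"

definition disj :: "heap \<Rightarrow> heap \<Rightarrow> bool" where
  "disj h1 h2 \<longleftrightarrow> dom h1 \<inter> dom h2 = {}"

definition hunion :: "heap \<Rightarrow> heap \<Rightarrow> heap" where
  "hunion h1 h2 = h1 ++ h2"

definition tminus :: "ennreal \<Rightarrow> ennreal \<Rightarrow> ennreal" where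
  "tminus a b = (if b = \<infinity> then 0 else if a = \<infinity> then \<infinity> else max (a - b) 0)"

definition sepcon :: "'v expect \<Rightarrow> 'v expect \<Rightarrow> 'v expect" where
  "sepcon f g = (\<lambda>(s,h). Inf {f (s,h1) + g (s,h2) | h1 h2.
       is_heap h1 \<and> is_heap h2 \<and> disj h1 h2 \<and> h = hunion h1 h2})"

definition sepimp :: "'v expect \<Rightarrow> 'v expect \<Rightarrow> 'v expect" where
  "sepimp f g = (\<lambda>(s,h). Sup {tminus (g (s, hunion h h')) (f (s,h')) | h'.
       is_heap h' \<and> disj h h'})"

definition pointsto :: "'v expr \<Rightarrow> 'v expr \<Rightarrow> 'v expect" where
  "pointsto e e' = (\<lambda>(s,h). if dom h = {e s} \<and> h (e s) = Some (e' s) then 0 else \<infinity>)"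

definition pointsto_any :: "'v expr \<Rightarrow> 'v expect" where
  "pointsto_any e = (\<lambda>(s,h). if dom h = {e s} then 0 else \<infinity>)"

definition ert_store :: "'v expr \<Rightarrow> 'v expr \<Rightarrow> 'v expect \<Rightarrow> 'v expect" where
  "ert_store e e' f = sepcon (pointsto_any e) (sepimp (pointsto e e') f)"

end

theory Submission
  imports Defs
begin

text \<open>Separating off the cell at \<open>e\<close> with \<open>[e \<mapsto> -]\<close> forces the left part of every split to
  be exactly that cell, so the infimum collapses to the value of the magic wand on the rest
  of the heap (or to \<open>\<infinity>\<close> if the cell is not allocated). Dually, the only extension that makes
  \<open>[e \<mapsto> e']\<close> finite is the single cell \<open>e \<mapsto> e'\<close>; every other one contributes
  \<open>_ \<ominus> \<infinity> = 0\<close>, so the supremum is \<open>f\<close> on the heap with that cell added back.\<close>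

lemma tminus_zero_right [simp]: "tminus a 0 = a"
  by (auto simp: tminus_def)

lemma dom_singleton_eq_iff: "(dom h = {l} \<and> h l = Some v) \<longleftrightarrow> h = [l \<mapsto> v]"
  by (auto simp: fun_eq_iff) (metis option.distinct(1))

lemma pointsto_eq: "pointsto e e' (s, h) = (if h = [e s \<mapsto> e' s] then 0 else \<infinity>)"
  by (simp add: pointsto_def dom_singleton_eq_iff)

lemma hunion_right_eq_restrict:
  assumes "disj h1 h2" and "h = hunion h1 h2"
  shows "h2 = h |` (- dom h1)"
proof
  fix k
  show "h2 k = (h |` (- dom h1)) k"
    using assms by (cases "k \<in> dom h1") (auto simp: disj_def hunion_def restrict_map_def map_add_def
        split: option.splits)
qed

lemma hunion_singleton_restrict:
  assumes "h l = Some v"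
  shows "hunion [l \<mapsto> v] (h |` (- {l})) = h"
  using assms by (auto simp: hunion_def fun_eq_iff restrict_map_def map_add_def
      split: option.splits)

lemma sepimp_pointsto:
  assumes "e s \<noteq> 0" and "e s \<notin> dom h"
  shows "sepimp (pointsto e e') f (s, h) = f (s, h(e s \<mapsto> e' s))"
proof -
  let ?cell = "[e s \<mapsto> e' s]"
  let ?S = "{tminus (f (s, hunion h h')) (pointsto e e' (s, h')) | h'. is_heap h' \<and> disj h h'}"
  have "is_heap ?cell" and "disj h ?cell"
    using assms by (auto simp: is_heap_def disj_def)
  then have "tminus (f (s, hunion h ?cell)) (pointsto e e' (s, ?cell)) \<in> ?S"
    by blast
  then have upper: "f (s, h(e s \<mapsto> e' s)) \<in> ?S"
    by (simp add: pointsto_eq hunion_def)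
  have "x \<le> f (s, h(e s \<mapsto> e' s))" if "x \<in> ?S" for x
    using that by (auto simp: pointsto_eq hunion_def tminus_def)
  with upper have "Sup ?S = f (s, h(e s \<mapsto> e' s))"
    by (intro antisym Sup_least Sup_upper)
  then show ?thesis
    by (simp add: sepimp_def)
qed

lemma sepcon_pointsto_any:
  assumes "is_heap h"
  shows "sepcon (pointsto_any e) g (s, h) =
           (if e s \<in> dom h then g (s, h |` (- {e s})) else \<infinity>)"
proof -
  let ?T = "{pointsto_any e (s, h1) + g (s, h2) | h1 h2.
       is_heap h1 \<and> is_heap h2 \<and> disj h1 h2 \<and> h = hunion h1 h2}"
  let ?rest = "h |` (- {e s})"
  have split_cell: "x = \<infinity> \<or> (e s \<in> dom h \<and> x = g (s, ?rest))" if "x \<in> ?T" for x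
  proof -
    obtain h1 h2 where x: "x = pointsto_any e (s, h1) + g (s, h2)"
      and split: "disj h1 h2" "h = hunion h1 h2"
      using \<open>x \<in> ?T\<close> by blast
    show ?thesis
    proof (cases "dom h1 = {e s}")
      case True
      then have "h2 = ?rest"
        using hunion_right_eq_restrict[OF split] by simp
      moreover have "e s \<in> dom h"
        using True split(2) by (auto simp: hunion_def)
      ultimately show ?thesis
        using x True by (simp add: pointsto_any_def)
    qed (simp add: x pointsto_any_def)
  qed
  show ?thesis
  proof (cases "e s \<in> dom h")
    case True
    then obtain v where v: "h (e s) = Some v"
      by auto
    have "e s \<noteq> 0"
      using assms True by (auto simp: is_heap_def)
    then have "is_heap [e s \<mapsto> v]" "is_heap ?rest" "disj [e s \<mapsto> v] ?rest"
      using assms by (auto simp: is_heap_def disj_def)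
    then have "pointsto_any e (s, [e s \<mapsto> v]) + g (s, ?rest) \<in> ?T"
      using hunion_singleton_restrict[of h "e s" v, OF v] by (smt (verit) mem_Collect_eq)
    then have lower: "g (s, ?rest) \<in> ?T"
      by (simp add: pointsto_any_def)
    have "g (s, ?rest) \<le> x" if "x \<in> ?T" for x
      using split_cell[OF that] by auto
    with lower have "Inf ?T = g (s, ?rest)"
      by (intro antisym Inf_lower Inf_greatest)
    then show ?thesis
      using True by (simp add: sepcon_def)
  next
    case False
    then have "\<forall>x \<in> ?T. x = \<infinity>"
      using split_cell by blast
    then have "Inf ?T = \<infinity>"
      by (simp add: Inf_top_conv)
    then show ?thesis
      using False by (simp add: sepcon_def)
  qed
qed

theorem mainTheorem14:
  fixes s :: "('v::finite) stack" and h :: heap and f :: "'v expect"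
    and e e' :: "'v expr"
  assumes "is_heap h"
  shows "ert_store e e' f (s,h) =
           (if e s \<in> dom h then f (s, h(e s \<mapsto> e' s)) else \<infinity>)"
proof (cases "e s \<in> dom h")
  case True
  have "e s \<noteq> 0"
    using assms True by (auto simp: is_heap_def)
  then have "sepimp (pointsto e e') f (s, h |` (- {e s})) =
             f (s, (h |` (- {e s}))(e s \<mapsto> e' s))"
    by (simp add: sepimp_pointsto)
  moreover have "(h |` (- {e s}))(e s \<mapsto> e' s) = h(e s \<mapsto> e' s)"
    by (auto simp: fun_eq_iff restrict_map_def)
  ultimately show ?thesis
    using assms True by (simp add: ert_store_def sepcon_pointsto_any)
next
  case False
  then show ?thesis
    using assms by (simp add: ert_store_def sepcon_pointsto_any)
qed

end
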